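(* Let $\hat Q_i:\mathcal X\times\mathcal A\to[0,1]$ and let $\pi_i^{(t)}$, $\bar Q_i^{(t)}$, $\bar\pi$ be produced by the GAMD inner loop (as in the context) for $T$ iterations. Then for every player $i$ and context $x$, $$\hat V_i^{\dagger,\bar\pi_{-i}}(x)-\hat V_i^{\bar\pi}(x)\le\max_{\pi_i\in\Delta(\mathcal A_i)}\frac1T\sum_{t=1}^Tf_{i,x}^{(t)}(\pi_i)-\frac1T\sum_{t=1}^Tf_{i,x}^{(t)}(\pi_i^{(t)}(\cdot|x))\le\mathcal O\!\left(\frac{\eta(1+\log T)}{T}\right),$$ where $f_{i,x}^{(t)}(\pi_i)=\sum_{a_i}\pi_i(a_i)\bar Q_i^{(t)}(x,a_i)-\eta^{-1}\mathrm{KL}(\pi_i\|\pi_i^{\mathrm{ref}}(\cdot|x))$.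
   Context: $m$-player game with contexts $x$, finite action sets $\mathcal A_i$, $\mathcal A=\prod_i\mathcal A_i$, full-support reference policies $\pi_i^{\mathrm{ref}}$, $\eta>0$. GAMD inner loop: $\pi_i^{(1)}=\pi_i^{\mathrm{ref}}$; $\bar Q_i^{(t)}(x,a_i)=\mathbb E_{\boldsymbol a_{-i}\sim\prod_{j\ne i}\pi_j^{(t)}(\cdot|x)}[\hat Q_i(x,a_i,\boldsymbol a_{-i})]$; $\pi_i^{(t+1)}(a_i|x)\propto(\pi_i^{\mathrm{ref}}(a_i|x))^{1/t}(\pi_i^{(t)}(a_i|x))^{(t-1)/t}\exp(\frac\eta t\bar Q_i^{(t)}(x,a_i))$; $\bar\pi(\boldsymbol a|x)=\frac1T\sum_{t=1}^T\prod_i\pi_i^{(t)}(a_i|x)$, with marginals $\bar\pi_i,\bar\pi_{-i}$. Empirical values: for a joint policy $\pi$, $\hat V_i^\pi(x)=\mathbb E_{\boldsymbol a\sim\pi(\cdot|x)}[\hat Q_i(x,\boldsymbol a)]-\eta^{-1}\mathrm{KL}(\pi_i(\cdot|x)\|\pi_i^{\mathrm{ref}}(\cdot|x))$; $\hat V_i^{\dagger,\nu_{-i}}(x)=\max_{\pi_i'}\hat V_i^{(\pi_i',\nu_{-i})}(x)$, where $(\pi_i',\nu_{-i})$ is the joint policy $\pi_i'(a_i|x)\nu_{-i}(\boldsymbol a_{-i}|x)$. $\mathcal O$ hides an absolute constant. *)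

theory Defs
  imports "HOL-Analysis.Analysis"
begin

text \<open>Players are 0,...,m-1. Player i has the finite action set A i (a set over a common
action type).\<close>

definition joint_actions :: "nat \<Rightarrow> (nat \<Rightarrow> 'a set) \<Rightarrow> (nat \<Rightarrow> 'a) set" where
  "joint_actions m A = PiE {..<m} A"

definition other_actions :: "nat \<Rightarrow> (nat \<Rightarrow> 'a set) \<Rightarrow> nat \<Rightarrow> (nat \<Rightarrow> 'a) set" where
  "other_actions m A i = PiE ({..<m} - {i}) A"

definition prob_simplex :: "'a set \<Rightarrow> ('a \<Rightarrow> real) set" where
  "prob_simplex S = {p. (\<forall>a\<in>S. 0 \<le> p a) \<and> (\<Sum>a\<in>S. p a) = 1 \<and> (\<forall>a. a \<notin> S \<longrightarrow> p a = 0)}"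

definition KL :: "'a set \<Rightarrow> ('a \<Rightarrow> real) \<Rightarrow> ('a \<Rightarrow> real) \<Rightarrow> real" where
  "KL S p q = (\<Sum>a\<in>S. if p a = 0 then 0 else p a * ln (p a / q a))"

definition qbar :: "nat \<Rightarrow> (nat \<Rightarrow> 'a set) \<Rightarrow> (nat \<Rightarrow> 'x \<Rightarrow> (nat \<Rightarrow> 'a) \<Rightarrow> real)
    \<Rightarrow> (nat \<Rightarrow> 'x \<Rightarrow> 'a \<Rightarrow> real) \<Rightarrow> nat \<Rightarrow> 'x \<Rightarrow> 'a \<Rightarrow> real" where
  "qbar m A Q P i x ai =
     (\<Sum>b\<in>other_actions m A i. (\<Prod>j\<in>{..<m} - {i}. P j x (b j)) * Q i x (b(i := ai)))"

definition gamd_step :: "nat \<Rightarrow> (nat \<Rightarrow> 'a set) \<Rightarrow> (nat \<Rightarrow> 'x \<Rightarrow> 'a \<Rightarrow> real) \<Rightarrow> real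
    \<Rightarrow> (nat \<Rightarrow> 'x \<Rightarrow> (nat \<Rightarrow> 'a) \<Rightarrow> real) \<Rightarrow> nat
    \<Rightarrow> (nat \<Rightarrow> 'x \<Rightarrow> 'a \<Rightarrow> real) \<Rightarrow> nat \<Rightarrow> 'x \<Rightarrow> 'a \<Rightarrow> real" where
  "gamd_step m A rf \<eta> Q t P i x ai =
     (let w = (\<lambda>b. rf i x b powr (1 / real t) * P i x b powr ((real t - 1) / real t)
                   * exp (\<eta> / real t * qbar m A Q P i x b))
      in w ai / (\<Sum>b\<in>A i. w b))"

text \<open>GAMD iterates: gamd ... t = jp^(t) for t \<ge> 1 (index 0 is unused and set to ref).\<close>
primrec gamd :: "nat \<Rightarrow> (nat \<Rightarrow> 'a set) \<Rightarrow> (nat \<Rightarrow> 'x \<Rightarrow> 'a \<Rightarrow> real) \<Rightarrow> real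
    \<Rightarrow> (nat \<Rightarrow> 'x \<Rightarrow> (nat \<Rightarrow> 'a) \<Rightarrow> real) \<Rightarrow> nat \<Rightarrow> nat \<Rightarrow> 'x \<Rightarrow> 'a \<Rightarrow> real" where
  "gamd m A rf \<eta> Q 0 = rf"
| "gamd m A rf \<eta> Q (Suc t) =
     (if t = 0 then rf else gamd_step m A rf \<eta> Q t (gamd m A rf \<eta> Q t))"

definition pibar :: "nat \<Rightarrow> (nat \<Rightarrow> 'a set) \<Rightarrow> (nat \<Rightarrow> 'x \<Rightarrow> 'a \<Rightarrow> real) \<Rightarrow> real
    \<Rightarrow> (nat \<Rightarrow> 'x \<Rightarrow> (nat \<Rightarrow> 'a) \<Rightarrow> real) \<Rightarrow> nat \<Rightarrow> 'x \<Rightarrow> (nat \<Rightarrow> 'a) \<Rightarrow> real" where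
  "pibar m A rf \<eta> Q T x a =
     (1 / real T) * (\<Sum>t\<in>{1..T}. \<Prod>j\<in>{..<m}. gamd m A rf \<eta> Q t j x (a j))"

definition marg :: "nat \<Rightarrow> (nat \<Rightarrow> 'a set) \<Rightarrow> ((nat \<Rightarrow> 'a) \<Rightarrow> real) \<Rightarrow> nat \<Rightarrow> 'a \<Rightarrow> real" where
  "marg m A jp i ai = (\<Sum>b\<in>other_actions m A i. jp (b(i := ai)))"

definition marg_others :: "nat \<Rightarrow> (nat \<Rightarrow> 'a set) \<Rightarrow> ((nat \<Rightarrow> 'a) \<Rightarrow> real) \<Rightarrow> nat
    \<Rightarrow> (nat \<Rightarrow> 'a) \<Rightarrow> real" where
  "marg_others m A jp i b = (\<Sum>ai\<in>A i. jp (b(i := ai)))"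

definition Vhat :: "nat \<Rightarrow> (nat \<Rightarrow> 'a set) \<Rightarrow> (nat \<Rightarrow> 'x \<Rightarrow> 'a \<Rightarrow> real) \<Rightarrow> real
    \<Rightarrow> (nat \<Rightarrow> 'x \<Rightarrow> (nat \<Rightarrow> 'a) \<Rightarrow> real) \<Rightarrow> nat \<Rightarrow> 'x \<Rightarrow> ((nat \<Rightarrow> 'a) \<Rightarrow> real) \<Rightarrow> real" where
  "Vhat m A rf \<eta> Q i x jp =
     (\<Sum>a\<in>joint_actions m A. jp a * Q i x a) - KL (A i) (marg m A jp i) (rf i x) / \<eta>"

definition Vdag :: "nat \<Rightarrow> (nat \<Rightarrow> 'a set) \<Rightarrow> (nat \<Rightarrow> 'x \<Rightarrow> 'a \<Rightarrow> real) \<Rightarrow> real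
    \<Rightarrow> (nat \<Rightarrow> 'x \<Rightarrow> (nat \<Rightarrow> 'a) \<Rightarrow> real) \<Rightarrow> nat \<Rightarrow> 'x \<Rightarrow> ((nat \<Rightarrow> 'a) \<Rightarrow> real) \<Rightarrow> real" where
  "Vdag m A rf \<eta> Q i x nu =
     (SUP p\<in>prob_simplex (A i). Vhat m A rf \<eta> Q i x
        (\<lambda>a. p (a i) * nu (restrict a ({..<m} - {i}))))"

definition floss :: "nat \<Rightarrow> (nat \<Rightarrow> 'a set) \<Rightarrow> (nat \<Rightarrow> 'x \<Rightarrow> 'a \<Rightarrow> real) \<Rightarrow> real
    \<Rightarrow> (nat \<Rightarrow> 'x \<Rightarrow> (nat \<Rightarrow> 'a) \<Rightarrow> real) \<Rightarrow> nat \<Rightarrow> nat \<Rightarrow> 'x \<Rightarrow> ('a \<Rightarrow> real) \<Rightarrow> real" where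
  "floss m A rf \<eta> Q t i x p =
     (\<Sum>ai\<in>A i. p ai * qbar m A Q (gamd m A rf \<eta> Q t) i x ai) - KL (A i) p (rf i x) / \<eta>"

end

(*
  GAMD is follow-the-regularized-leader with the KL regularizer. By induction on t, the geometric
  update produces the Gibbs distribution pi_i^(t+1) proportional to pi_ref exp (eta * theta_t), where
  theta_t is the running mean of the payoffs Qbar_i^(1), ..., Qbar_i^(t); this is the maximiser of
  the cumulative regularized gain f^(1) + ... + f^(t).

  Regret: the potential Phi_t = (t / eta) ln Z_t dominates every cumulative gain by the Gibbs
  variational principle, and Phi_t - Phi_(t-1) - f^(t)(pi^(t)) equals (t / eta) times the gap
  ln E exp d - E d for a variable d bounded by eta / t, hence is at most 2 eta / t. Summing gives
  regret at most 2 eta H_T <= 2 eta (1 + ln T).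

  Duality gap: against the opponents' marginal of the averaged policy, the deviation p earns exactly
  the average gain of p, so the best response value is the best average gain; and convexity of KL
  makes the value of the averaged policy at least the average gain of the iterates.
*)
theory Submission
  imports Defs
begin

section \<open>Inequalities for the exponential and relative entropy\<close>

lemma harm_le_one_plus_ln:
  assumes "1 \<le> n"
  shows "(harm n :: real) \<le> 1 + ln (real n)"
  using euler_mascheroni_sequence_decreasing[of 1 n] assms by (simp add: harm_def)

lemma exp_le_one_plus_x_plus_sq:
  fixes x :: real
  assumes "x \<le> 1"
  shows "exp x \<le> 1 + x + x\<^sup>2"
proof (cases "0 \<le> x")
  case True
  then show ?thesis using assms by (rule exp_bound)
next
  case False
  have "exp x * (1 - x) \<le> exp x * exp (- x)"
    using exp_ge_add_one_self[of "- x"] by (intro mult_left_mono) auto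
  also have "\<dots> = 1" by (simp add: exp_minus_inverse)
  also have "1 \<le> (1 - x) * (1 + x + x\<^sup>2)"
    using False by (simp add: algebra_simps power2_eq_square mult_nonneg_nonpos2)
  finally show ?thesis
    using False by (simp add: mult.commute)
qed

lemma ln_mean_exp_le:
  fixes p d :: "'a \<Rightarrow> real"
  assumes "finite S" and p: "\<And>a. a \<in> S \<Longrightarrow> 0 \<le> p a" "(\<Sum>a\<in>S. p a) = 1"
    and d: "\<And>a. a \<in> S \<Longrightarrow> \<bar>d a\<bar> \<le> c"
  shows "ln (\<Sum>a\<in>S. p a * exp (d a)) \<le> (\<Sum>a\<in>S. p a * d a) + 2 * c\<^sup>2"
proof -
  obtain a0 where "a0 \<in> S" "0 < p a0"
    using p by (metis less_eq_real_def sum.neutral zero_neq_one)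
  have "0 \<le> c" using d[OF \<open>a0 \<in> S\<close>] by linarith
  have d_bounds: "- c \<le> d a" "d a \<le> c" if "a \<in> S" for a
    using d[OF that] by auto
  have M_pos: "0 < (\<Sum>a\<in>S. p a * exp (d a))"
    using \<open>finite S\<close> \<open>a0 \<in> S\<close> \<open>0 < p a0\<close> p by (intro sum_pos2) auto
  have mean_ge: "- c \<le> (\<Sum>a\<in>S. p a * d a)"
  proof -
    have "(\<Sum>a\<in>S. p a * (- c)) \<le> (\<Sum>a\<in>S. p a * d a)"
      using p d_bounds by (intro sum_mono mult_left_mono) auto
    then show ?thesis using p by (simp add: sum_negf sum_distrib_right[symmetric])
  qed
  show ?thesis
  proof (cases "c \<le> 1")
    case True
    have "(\<Sum>a\<in>S. p a * exp (d a)) \<le> (\<Sum>a\<in>S. p a * (1 + d a + c\<^sup>2))"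
    proof (intro sum_mono mult_left_mono)
      fix a assume "a \<in> S"
      then have "\<bar>d a\<bar> \<le> c" by (rule d)
      then have "exp (d a) \<le> 1 + d a + (d a)\<^sup>2"
        using True by (intro exp_le_one_plus_x_plus_sq) auto
      also have "(d a)\<^sup>2 \<le> c\<^sup>2"
        using \<open>\<bar>d a\<bar> \<le> c\<close> by (metis abs_ge_zero power2_abs power_mono)
      finally show "exp (d a) \<le> 1 + d a + c\<^sup>2" by simp
    qed (use p in auto)
    also have "\<dots> = 1 + (\<Sum>a\<in>S. p a * d a) + c\<^sup>2"
      using p by (simp add: algebra_simps sum.distrib sum_distrib_right[symmetric])
    finally show ?thesis
      using ln_le_minus_one[OF M_pos] zero_le_power2[of c] by linarith
  next
    case False
    have "(\<Sum>a\<in>S. p a * exp (d a)) \<le> (\<Sum>a\<in>S. p a * exp c)"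
      using p d_bounds by (intro sum_mono mult_left_mono) auto
    also have "\<dots> = exp c" using p by (simp add: sum_distrib_right[symmetric])
    finally have "ln (\<Sum>a\<in>S. p a * exp (d a)) \<le> c"
      using M_pos by (metis ln_exp ln_le_cancel_iff exp_gt_zero)
    moreover have "2 * c \<le> 2 * c\<^sup>2" using False by (simp add: power2_eq_square)
    ultimately show ?thesis using mean_ge by linarith
  qed
qed

lemma KL_eq_sum: "KL S p r = (\<Sum>a\<in>S. p a * ln (p a / r a))"
  unfolding KL_def by (intro sum.cong) auto

lemma convex_on_mult_ln_div:
  assumes "0 < c"
  shows "convex_on {0<..} (\<lambda>y::real. y * ln (y / c))"
proof (rule convex_on_realI[where f' = "\<lambda>y. ln (y / c) + 1"])
  fix y :: real assume "y \<in> {0<..}"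
  then show "((\<lambda>y. y * ln (y / c)) has_real_derivative ln (y / c) + 1) (at y)"
    using assms by (auto intro!: derivative_eq_intros)
next
  fix x y :: real assume "x \<in> {0<..}" "y \<in> {0<..}" "x \<le> y"
  then show "ln (x / c) + 1 \<le> ln (y / c) + 1"
    using assms by (simp add: divide_right_mono)
qed simp

lemma KL_convex_combination_le:
  assumes "finite I" and w: "(\<Sum>t\<in>I. w t) = 1" "\<And>t. t \<in> I \<Longrightarrow> 0 \<le> w t"
    and r: "\<And>a. a \<in> S \<Longrightarrow> 0 < r a"
    and P: "\<And>t a. t \<in> I \<Longrightarrow> a \<in> S \<Longrightarrow> 0 < P t a"
  shows "KL S (\<lambda>a. \<Sum>t\<in>I. w t * P t a) r \<le> (\<Sum>t\<in>I. w t * KL S (P t) r)"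
proof -
  have "I \<noteq> {}" using w(1) by auto
  have "(\<Sum>t\<in>I. w t * P t a) * ln ((\<Sum>t\<in>I. w t * P t a) / r a)
      \<le> (\<Sum>t\<in>I. w t * (P t a * ln (P t a / r a)))" if "a \<in> S" for a
    using convex_on_sum[OF \<open>finite I\<close> \<open>I \<noteq> {}\<close> convex_on_mult_ln_div[OF r[OF that]] w, of "\<lambda>t. P t a"]
      P that by simp
  then have "KL S (\<lambda>a. \<Sum>t\<in>I. w t * P t a) r \<le> (\<Sum>a\<in>S. \<Sum>t\<in>I. w t * (P t a * ln (P t a / r a)))"
    unfolding KL_eq_sum by (rule sum_mono)
  also have "\<dots> = (\<Sum>t\<in>I. w t * KL S (P t) r)"
    unfolding KL_eq_sum sum_distrib_left by (rule sum.swap)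
  finally show ?thesis .
qed

section \<open>Gibbs distributions\<close>

definition partition_fn :: "'a set \<Rightarrow> ('a \<Rightarrow> real) \<Rightarrow> ('a \<Rightarrow> real) \<Rightarrow> real" where
  "partition_fn S r v = (\<Sum>a\<in>S. r a * exp (v a))"

definition gibbs :: "'a set \<Rightarrow> ('a \<Rightarrow> real) \<Rightarrow> ('a \<Rightarrow> real) \<Rightarrow> 'a \<Rightarrow> real" where
  "gibbs S r v a = r a * exp (v a) / partition_fn S r v"

locale positive_reference =
  fixes S :: "'a set" and r :: "'a \<Rightarrow> real"
  assumes finite_S: "finite S" and S_nonempty: "S \<noteq> {}"
    and r_pos: "\<And>a. a \<in> S \<Longrightarrow> 0 < r a"
begin

lemma partition_pos: "0 < partition_fn S r v"
  unfolding partition_fn_def using finite_S S_nonempty r_pos by (intro sum_pos) auto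

lemma gibbs_pos: "a \<in> S \<Longrightarrow> 0 < gibbs S r v a"
  unfolding gibbs_def using partition_pos r_pos by simp

lemma sum_gibbs: "(\<Sum>a\<in>S. gibbs S r v a) = 1"
  unfolding gibbs_def sum_divide_distrib[symmetric]
  using partition_pos[of v] by (simp add: partition_fn_def)

lemma KL_gibbs:
  "KL S (gibbs S r v) r = (\<Sum>a\<in>S. gibbs S r v a * v a) - ln (partition_fn S r v)"
proof -
  have "KL S (gibbs S r v) r = (\<Sum>a\<in>S. gibbs S r v a * (v a - ln (partition_fn S r v)))"
    unfolding KL_eq_sum
    by (intro sum.cong refl) (use partition_pos r_pos in \<open>simp add: gibbs_def ln_div\<close>)
  then show ?thesis
    by (simp add: right_diff_distrib sum_subtractf sum_distrib_right[symmetric] sum_gibbs)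
qed

lemma gibbs_variational_le:
  assumes p: "p \<in> prob_simplex S"
  shows "(\<Sum>a\<in>S. p a * v a) - KL S p r \<le> ln (partition_fn S r v)"
proof -
  define Z where "Z = partition_fn S r v"
  have "0 < Z" unfolding Z_def by (rule partition_pos)
  have p0: "\<And>a. a \<in> S \<Longrightarrow> 0 \<le> p a" and p1: "(\<Sum>a\<in>S. p a) = 1"
    using p unfolding prob_simplex_def by auto
  have "p a * (v a - ln (p a / r a) - ln Z) \<le> r a * exp (v a) / Z - p a" if "a \<in> S" for a
  proof (cases "p a = 0")
    case True
    then show ?thesis using r_pos[OF that] \<open>0 < Z\<close> by simp
  next
    case False
    then have "0 < p a" using p0[OF that] by simp
    have "v a - ln (p a / r a) - ln Z = ln (r a * exp (v a) / (Z * p a))"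
      using \<open>0 < p a\<close> r_pos[OF that] \<open>0 < Z\<close> by (simp add: ln_div ln_mult)
    also have "\<dots> \<le> r a * exp (v a) / (Z * p a) - 1"
      using \<open>0 < p a\<close> r_pos[OF that] \<open>0 < Z\<close> by (intro ln_le_minus_one) simp
    finally have "p a * (v a - ln (p a / r a) - ln Z) \<le> p a * (r a * exp (v a) / (Z * p a) - 1)"
      using \<open>0 < p a\<close> by (intro mult_left_mono) auto
    then show ?thesis
      using \<open>0 < p a\<close> by (simp add: field_simps)
  qed
  then have "(\<Sum>a\<in>S. p a * (v a - ln (p a / r a) - ln Z)) \<le> (\<Sum>a\<in>S. r a * exp (v a) / Z - p a)"
    by (rule sum_mono)
  also have "\<dots> = 0"
    using \<open>0 < Z\<close> p1 unfolding Z_def partition_fn_def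
    by (simp add: sum_subtractf sum_divide_distrib[symmetric])
  finally show ?thesis
    using p1 unfolding Z_def[symmetric]
    by (simp add: KL_eq_sum algebra_simps sum_subtractf sum.distrib sum_distrib_left[symmetric])
qed

lemma sum_gibbs_mult_exp:
  "(\<Sum>a\<in>S. gibbs S r v a * exp (d a)) = partition_fn S r (\<lambda>a. v a + d a) / partition_fn S r v"
  unfolding gibbs_def partition_fn_def[of S r "\<lambda>a. v a + d a"]
  by (simp add: sum_divide_distrib exp_add mult.assoc)

text \<open>This is the shape of \<^const>\<open>gamd_step\<close>: it moves the exponent \<open>\<eta> v\<close> of a Gibbs policy
  to \<open>\<eta> ((t - 1) v + u) / t\<close>.\<close>

lemma gibbs_geometric_update:
  fixes t \<eta> :: real
  assumes "0 < t" "a \<in> S" and p: "\<And>b. b \<in> S \<Longrightarrow> p b = gibbs S r (\<lambda>b. \<eta> * v b) b"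
  shows "(let w = (\<lambda>b. r b powr (1 / t) * p b powr ((t - 1) / t) * exp (\<eta> / t * u b))
          in w a / (\<Sum>b\<in>S. w b))
       = gibbs S r (\<lambda>b. \<eta> * (((t - 1) * v b + u b) / t)) a"
proof -
  define Z where "Z = partition_fn S r (\<lambda>b. \<eta> * v b)"
  define K where "K = exp (- ((t - 1) / t) * ln Z)"
  have "0 < Z" unfolding Z_def by (rule partition_pos)
  have w: "r b powr (1 / t) * p b powr ((t - 1) / t) * exp (\<eta> / t * u b)
      = K * (r b * exp (\<eta> * (((t - 1) * v b + u b) / t)))" if "b \<in> S" for b
  proof -
    have "0 < r b" "0 < p b" using r_pos gibbs_pos p that by auto
    have ln_p: "ln (p b) = ln (r b) + \<eta> * v b - ln Z"
      using p[OF that] \<open>0 < r b\<close> \<open>0 < Z\<close> by (simp add: gibbs_def Z_def ln_div ln_mult)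
    have "r b powr (1 / t) * p b powr ((t - 1) / t) * exp (\<eta> / t * u b)
        = exp (ln (r b) / t + (t - 1) / t * ln (p b) + \<eta> / t * u b)"
      using \<open>0 < r b\<close> \<open>0 < p b\<close> by (simp add: powr_def exp_add)
    also have "ln (r b) / t + (t - 1) / t * ln (p b) + \<eta> / t * u b
        = - ((t - 1) / t) * ln Z + (ln (r b) + \<eta> * (((t - 1) * v b + u b) / t))"
      unfolding ln_p using \<open>0 < t\<close> by (simp add: field_simps)
    finally show ?thesis
      using \<open>0 < r b\<close> by (simp only: K_def exp_add exp_ln)
  qed
  have "0 < K" unfolding K_def by simp
  have "(\<Sum>b\<in>S. r b powr (1 / t) * p b powr ((t - 1) / t) * exp (\<eta> / t * u b))
      = K * partition_fn S r (\<lambda>b. \<eta> * (((t - 1) * v b + u b) / t))"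
    unfolding partition_fn_def sum_distrib_left by (rule sum.cong[OF refl w])
  then show ?thesis
    unfolding Let_def w[OF \<open>a \<in> S\<close>] using \<open>0 < K\<close> by (simp add: gibbs_def)
qed

end

section \<open>Follow the regularized leader with relative-entropy regularization\<close>

text \<open>Since \<open>x / 0 = 0\<close>, \<open>running_mean q 0\<close> is \<open>0\<close>: the Gibbs policy of the empty history is the
  normalised reference.\<close>

definition running_mean :: "(nat \<Rightarrow> 'a \<Rightarrow> real) \<Rightarrow> nat \<Rightarrow> 'a \<Rightarrow> real" where
  "running_mean q n a = (\<Sum>s=1..n. q s a) / real n"

lemma sum_eq_running_mean: "(\<Sum>s=1..n. q s a) = real n * running_mean q n a"
  by (cases "n = 0") (simp_all add: running_mean_def)

lemma running_mean_Suc: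
  "running_mean q (Suc n) a = (real n * running_mean q n a + q (Suc n) a) / real (Suc n)"
  unfolding running_mean_def by (cases "n = 0") simp_all

lemma running_mean_range:
  assumes "\<And>s. 1 \<le> s \<Longrightarrow> 0 \<le> q s a \<and> q s a \<le> 1"
  shows "0 \<le> running_mean q n a \<and> running_mean q n a \<le> 1"
proof -
  have "0 \<le> (\<Sum>s=1..n. q s a)"
    using assms by (intro sum_nonneg) auto
  moreover have "(\<Sum>s=1..n. q s a) \<le> (\<Sum>s=1..n. 1)"
    using assms by (intro sum_mono) auto
  ultimately show ?thesis
    unfolding running_mean_def by (cases "n = 0") simp_all
qed

definition regularized_gain ::
    "'a set \<Rightarrow> ('a \<Rightarrow> real) \<Rightarrow> real \<Rightarrow> ('a \<Rightarrow> real) \<Rightarrow> ('a \<Rightarrow> real) \<Rightarrow> real" where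
  "regularized_gain S r \<eta> q p = (\<Sum>a\<in>S. p a * q a) - KL S p r / \<eta>"

lemma regularized_gain_cong:
  assumes "\<And>a. a \<in> S \<Longrightarrow> p a = p' a"
  shows "regularized_gain S r \<eta> q p = regularized_gain S r \<eta> q p'"
  unfolding regularized_gain_def KL_eq_sum using assms by (simp cong: sum.cong)

lemma prob_simplex_nonempty:
  assumes "finite S" "S \<noteq> {}"
  shows "prob_simplex S \<noteq> {}"
proof -
  have "(\<lambda>a. if a \<in> S then 1 / real (card S) else 0) \<in> prob_simplex S"
    unfolding prob_simplex_def using assms by simp
  then show ?thesis by blast
qed

locale entropic_ftrl = positive_reference S r
  for S :: "'a set" and r :: "'a \<Rightarrow> real" +
  fixes \<eta> :: real and q :: "nat \<Rightarrow> 'a \<Rightarrow> real"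
  assumes eta_pos: "0 < \<eta>"
    and q_range: "\<And>t a. 1 \<le> t \<Longrightarrow> a \<in> S \<Longrightarrow> 0 \<le> q t a \<and> q t a \<le> 1"
begin

abbreviation gain :: "nat \<Rightarrow> ('a \<Rightarrow> real) \<Rightarrow> real" where
  "gain t \<equiv> regularized_gain S r \<eta> (q t)"

text \<open>\<open>leader n\<close> maximises the gain accumulated over rounds \<open>1..n\<close>, and \<open>potential n\<close> is
  that maximum.\<close>

definition leader :: "nat \<Rightarrow> 'a \<Rightarrow> real" where
  "leader n = gibbs S r (\<lambda>a. \<eta> * running_mean q n a)"

definition potential :: "nat \<Rightarrow> real" where
  "potential n = real n / \<eta> * ln (partition_fn S r (\<lambda>a. \<eta> * running_mean q n a))"

lemma cumulative_gain_le_potential: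
  assumes "p \<in> prob_simplex S"
  shows "(\<Sum>t=1..n. gain t p) \<le> potential n"
proof -
  have "(\<Sum>t=1..n. \<Sum>a\<in>S. p a * q t a) = (\<Sum>a\<in>S. p a * (real n * running_mean q n a))"
    by (subst sum.swap) (simp only: sum_distrib_left[symmetric] sum_eq_running_mean)
  then have "(\<Sum>t=1..n. gain t p)
      = real n / \<eta> * ((\<Sum>a\<in>S. p a * (\<eta> * running_mean q n a)) - KL S p r)"
    unfolding regularized_gain_def sum_subtractf
    using eta_pos by (simp add: sum_distrib_left field_simps)
  also have "\<dots> \<le> potential n"
    unfolding potential_def using eta_pos
    by (intro mult_left_mono gibbs_variational_le assms) auto
  finally show ?thesis .
qed

lemma potential_Suc_le:
  "potential (Suc n) \<le> potential n + gain (Suc n) (leader n) + 2 * \<eta> / real (Suc n)"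
proof -
  define t where "t = real (Suc n)"
  define v where "v = (\<lambda>a. \<eta> * running_mean q n a)"
  define d where "d = (\<lambda>a. \<eta> / t * (q (Suc n) a - running_mean q n a))"
  define p where "p = leader n"
  have "0 < t" and n_eq: "real n = t - 1" unfolding t_def by simp_all
  have v_next: "\<eta> * running_mean q (Suc n) a = v a + d a" for a
    unfolding v_def d_def t_def running_mean_Suc by (simp add: field_simps)
  have p_gibbs: "p = gibbs S r v" unfolding p_def leader_def v_def ..
  have d_bound: "\<bar>d a\<bar> \<le> \<eta> / t" if "a \<in> S" for a
  proof -
    have "\<bar>q (Suc n) a - running_mean q n a\<bar> \<le> 1"
      using q_range[of "Suc n" a] running_mean_range[of q a n] q_range that by fastforce
    then have "\<eta> * \<bar>q (Suc n) a - running_mean q n a\<bar> \<le> \<eta>"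
      using eta_pos by (simp add: mult_left_le)
    then show ?thesis
      unfolding d_def using eta_pos \<open>0 < t\<close> by (simp add: abs_mult divide_right_mono)
  qed
  have ln_ratio: "ln (partition_fn S r (\<lambda>a. v a + d a) / partition_fn S r v)
      \<le> (\<Sum>a\<in>S. p a * d a) + 2 * (\<eta> / t)\<^sup>2"
    unfolding p_gibbs sum_gibbs_mult_exp[symmetric]
    using finite_S gibbs_pos sum_gibbs
    by (intro ln_mean_exp_le d_bound) (auto intro: less_imp_le)
  have mean_d: "(\<Sum>a\<in>S. p a * d a)
      = \<eta> / t * ((\<Sum>a\<in>S. p a * q (Suc n) a) - (\<Sum>a\<in>S. p a * running_mean q n a))"
    unfolding d_def by (simp add: sum_distrib_left sum_subtractf algebra_simps)
  have gain_p: "gain (Suc n) p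
      = (\<Sum>a\<in>S. p a * q (Suc n) a) - (\<Sum>a\<in>S. p a * running_mean q n a)
        + ln (partition_fn S r v) / \<eta>"
    unfolding regularized_gain_def p_gibbs KL_gibbs
    using eta_pos by (simp add: v_def sum_distrib_left[symmetric] mult.left_commute diff_divide_distrib)
  have ln_div_Z: "ln (partition_fn S r (\<lambda>a. v a + d a) / partition_fn S r v)
      = ln (partition_fn S r (\<lambda>a. v a + d a)) - ln (partition_fn S r v)"
    using partition_pos[of "\<lambda>a. v a + d a"] partition_pos[of v] by (rule ln_divide_pos)
  have "potential (Suc n) - potential n - gain (Suc n) p
      = t / \<eta> * (ln (partition_fn S r (\<lambda>a. v a + d a) / partition_fn S r v)
          - (\<Sum>a\<in>S. p a * d a))"
    unfolding potential_def v_next v_def[symmetric] gain_p mean_d ln_div_Z t_def[symmetric] n_eq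
    using eta_pos \<open>0 < t\<close> by (simp add: field_simps)
  also have "\<dots> \<le> t / \<eta> * (2 * (\<eta> / t)\<^sup>2)"
    using ln_ratio eta_pos \<open>0 < t\<close> by (intro mult_left_mono) auto
  also have "\<dots> = 2 * \<eta> / t"
    using eta_pos \<open>0 < t\<close> by (simp add: power2_eq_square)
  finally show ?thesis unfolding p_def t_def by simp
qed

lemma potential_le_cumulative_leader_gain:
  "potential T \<le> (\<Sum>t=1..T. gain t (leader (t - 1))) + 2 * \<eta> * harm T"
proof (induction T)
  case 0
  then show ?case by (simp add: potential_def harm_def)
next
  case (Suc T)
  have "(\<Sum>t=1..Suc T. gain t (leader (t - 1)))
      = (\<Sum>t=1..T. gain t (leader (t - 1))) + gain (Suc T) (leader T)"
    by simp
  moreover have "2 * \<eta> * harm (Suc T) = 2 * \<eta> * harm T + 2 * \<eta> / real (Suc T)"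
    by (simp add: harm_Suc field_simps)
  ultimately show ?case
    using Suc.IH potential_Suc_le[of T] by linarith
qed

lemma regret_le:
  assumes "1 \<le> T"
  shows "(SUP p\<in>prob_simplex S. (1 / real T) * (\<Sum>t=1..T. gain t p))
           - (1 / real T) * (\<Sum>t=1..T. gain t (leader (t - 1)))
         \<le> 2 * (\<eta> * (1 + ln (real T)) / real T)"
proof -
  have "0 < real T" using assms by simp
  have "(SUP p\<in>prob_simplex S. (1 / real T) * (\<Sum>t=1..T. gain t p)) \<le> potential T / real T"
    using prob_simplex_nonempty[OF finite_S S_nonempty] cumulative_gain_le_potential \<open>0 < real T\<close>
    by (intro cSUP_least) (auto simp: divide_right_mono)
  moreover have "potential T / real T
      \<le> (1 / real T) * (\<Sum>t=1..T. gain t (leader (t - 1))) + 2 * \<eta> * harm T / real T"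
    using divide_right_mono[OF potential_le_cumulative_leader_gain \<open>0 < real T\<close>[THEN less_imp_le]]
    by (simp add: add_divide_distrib)
  moreover have "2 * \<eta> * harm T / real T \<le> 2 * (\<eta> * (1 + ln (real T)) / real T)"
    using harm_le_one_plus_ln[OF assms] eta_pos \<open>0 < real T\<close> by (simp add: divide_right_mono)
  ultimately show ?thesis by linarith
qed

end

section \<open>Joint actions and product policies\<close>

lemma sum_joint_actions_split:
  assumes "i < m"
  shows "(\<Sum>a\<in>joint_actions m A. g a) = (\<Sum>ai\<in>A i. \<Sum>b\<in>other_actions m A i. g (b(i := ai)))"
proof -
  have "{..<m} = insert i ({..<m} - {i})" using assms by auto
  then have joint: "joint_actions m A = (\<lambda>(y, b). b(i := y)) ` (A i \<times> other_actions m A i)"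
    unfolding joint_actions_def other_actions_def by (metis PiE_insert_eq)
  have "inj_on (\<lambda>(y, b). b(i := y)) (A i \<times> other_actions m A i)"
    unfolding other_actions_def by (rule inj_combinator) simp
  then show ?thesis
    unfolding joint sum.reindex[OF \<open>inj_on _ _\<close>] by (simp add: sum.cartesian_product case_prod_unfold)
qed

lemma upd_in_joint_actions:
  "i < m \<Longrightarrow> b \<in> other_actions m A i \<Longrightarrow> ai \<in> A i \<Longrightarrow> b(i := ai) \<in> joint_actions m A"
  unfolding joint_actions_def other_actions_def
  by (metis PiE_fun_upd insert_Diff_single insert_absorb lessThan_iff)

lemma restrict_other_actions:
  "b \<in> other_actions m A i \<Longrightarrow> restrict b ({..<m} - {i}) = b"
  unfolding other_actions_def by (rule PiE_restrict)

lemma prod_upd_split: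
  fixes m :: nat
  assumes "i < m"
  shows "(\<Prod>j<m. f j ((b(i := ai)) j)) = f i ai * (\<Prod>j\<in>{..<m} - {i}. f j (b j))"
proof -
  have "(\<Prod>j<m. f j ((b(i := ai)) j)) = f i ai * (\<Prod>j\<in>{..<m} - {i}. f j ((b(i := ai)) j))"
    using assms prod.remove[of "{..<m}" i "\<lambda>j. f j ((b(i := ai)) j)"] by simp
  also have "(\<Prod>j\<in>{..<m} - {i}. f j ((b(i := ai)) j)) = (\<Prod>j\<in>{..<m} - {i}. f j (b j))"
    by (intro prod.cong) auto
  finally show ?thesis .
qed

lemma Vhat_product:
  assumes "i < m" and \<nu>: "(\<Sum>b\<in>other_actions m A i. \<nu> b) = 1"
  shows "Vhat m A rf \<eta> Q i x (\<lambda>a. p (a i) * \<nu> (restrict a ({..<m} - {i})))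
       = (\<Sum>ai\<in>A i. p ai * (\<Sum>b\<in>other_actions m A i. \<nu> b * Q i x (b(i := ai))))
         - KL (A i) p (rf i x) / \<eta>"
proof -
  have "marg m A (\<lambda>a. p (a i) * \<nu> (restrict a ({..<m} - {i}))) i = p"
  proof
    fix ai
    have "marg m A (\<lambda>a. p (a i) * \<nu> (restrict a ({..<m} - {i}))) i ai
        = (\<Sum>b\<in>other_actions m A i. p ai * \<nu> b)"
      unfolding marg_def by (intro sum.cong refl) (simp add: restrict_other_actions)
    then show "marg m A (\<lambda>a. p (a i) * \<nu> (restrict a ({..<m} - {i}))) i ai = p ai"
      using \<nu> by (simp add: sum_distrib_left[symmetric])
  qed
  moreover have "(\<Sum>a\<in>joint_actions m A. p (a i) * \<nu> (restrict a ({..<m} - {i})) * Q i x a)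
      = (\<Sum>ai\<in>A i. p ai * (\<Sum>b\<in>other_actions m A i. \<nu> b * Q i x (b(i := ai))))"
    unfolding sum_joint_actions_split[OF \<open>i < m\<close>] sum_distrib_left
    by (intro sum.cong refl) (simp add: restrict_other_actions mult.assoc)
  ultimately show ?thesis by (simp add: Vhat_def)
qed

section \<open>The GAMD iterates\<close>

lemma floss_eq_regularized_gain:
  "floss m A rf \<eta> Q t i x = regularized_gain (A i) (rf i x) \<eta> (qbar m A Q (gamd m A rf \<eta> Q t) i x)"
  unfolding floss_def regularized_gain_def ..

locale gamd_game =
  fixes m :: nat and A :: "nat \<Rightarrow> 'a set" and rf :: "nat \<Rightarrow> 'x \<Rightarrow> 'a \<Rightarrow> real"
    and \<eta> :: real and Q :: "nat \<Rightarrow> 'x \<Rightarrow> (nat \<Rightarrow> 'a) \<Rightarrow> real"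
  assumes finite_actions: "\<And>j. j < m \<Longrightarrow> finite (A j)"
    and actions_nonempty: "\<And>j. j < m \<Longrightarrow> A j \<noteq> {}"
    and rf_pos: "\<And>j y a. j < m \<Longrightarrow> a \<in> A j \<Longrightarrow> 0 < rf j y a"
    and rf_sum: "\<And>j y. j < m \<Longrightarrow> (\<Sum>a\<in>A j. rf j y a) = 1"
    and Q_range: "\<And>j y a. j < m \<Longrightarrow> a \<in> joint_actions m A \<Longrightarrow> 0 \<le> Q j y a \<and> Q j y a \<le> 1"
    and eta_pos: "0 < \<eta>"
begin

abbreviation \<pi> :: "nat \<Rightarrow> nat \<Rightarrow> 'x \<Rightarrow> 'a \<Rightarrow> real" where
  "\<pi> t \<equiv> gamd m A rf \<eta> Q t"

lemma positive_reference_rf: "j < m \<Longrightarrow> positive_reference (A j) (rf j y)"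
  by unfold_locales (auto simp: finite_actions actions_nonempty rf_pos)

lemma gamd_eq_gibbs:
  assumes "j < m" "a \<in> A j"
  shows "\<pi> (Suc n) j y a
       = gibbs (A j) (rf j y) (\<lambda>b. \<eta> * running_mean (\<lambda>s. qbar m A Q (\<pi> s) j y) n b) a"
  using assms(2)
proof (induction n arbitrary: a)
  case 0
  then show ?case
    using rf_sum[OF \<open>j < m\<close>] by (simp add: gibbs_def partition_fn_def running_mean_def)
next
  case (Suc n)
  interpret positive_reference "A j" "rf j y" using positive_reference_rf[OF \<open>j < m\<close>] .
  have "\<pi> (Suc (Suc n)) j y a = gamd_step m A rf \<eta> Q (Suc n) (\<pi> (Suc n)) j y a" by simp
  also have "\<dots> = gibbs (A j) (rf j y)
      (\<lambda>b. \<eta> * ((real n * running_mean (\<lambda>s. qbar m A Q (\<pi> s) j y) n b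
                 + qbar m A Q (\<pi> (Suc n)) j y b) / real (Suc n))) a"
    unfolding gamd_step_def
    using gibbs_geometric_update[of "real (Suc n)" a "\<pi> (Suc n) j y", OF _ Suc.prems Suc.IH]
    by simp
  finally show ?case by (simp only: running_mean_Suc)
qed

lemma gamd_pos:
  assumes "1 \<le> t" "j < m" "a \<in> A j"
  shows "0 < \<pi> t j y a"
proof -
  obtain n where "t = Suc n" using assms(1) by (cases t) auto
  show ?thesis
    unfolding \<open>t = Suc n\<close> gamd_eq_gibbs[OF assms(2,3)]
    by (rule positive_reference.gibbs_pos[OF positive_reference_rf[OF assms(2)] assms(3)])
qed

lemma sum_gamd:
  assumes "1 \<le> t" "j < m"
  shows "(\<Sum>a\<in>A j. \<pi> t j y a) = 1"
proof -
  obtain n where "t = Suc n" using assms(1) by (cases t) auto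
  then have "(\<Sum>a\<in>A j. \<pi> t j y a)
      = (\<Sum>a\<in>A j. gibbs (A j) (rf j y) (\<lambda>b. \<eta> * running_mean (\<lambda>s. qbar m A Q (\<pi> s) j y) n b) a)"
    unfolding \<open>t = Suc n\<close> using gamd_eq_gibbs[OF assms(2)] by (intro sum.cong refl)
  then show ?thesis
    using positive_reference.sum_gibbs[OF positive_reference_rf[OF assms(2)]] by simp
qed

end

locale gamd_player = gamd_game m A rf \<eta> Q
  for m :: nat and A :: "nat \<Rightarrow> 'a set" and rf :: "nat \<Rightarrow> 'x \<Rightarrow> 'a \<Rightarrow> real"
    and \<eta> :: real and Q :: "nat \<Rightarrow> 'x \<Rightarrow> (nat \<Rightarrow> 'a) \<Rightarrow> real" +
  fixes i :: nat
  assumes player: "i < m"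
begin

abbreviation others_policy :: "nat \<Rightarrow> 'x \<Rightarrow> (nat \<Rightarrow> 'a) \<Rightarrow> real" where
  "others_policy t y b \<equiv> \<Prod>j\<in>{..<m} - {i}. \<pi> t j y (b j)"

abbreviation \<pi>bar :: "nat \<Rightarrow> 'x \<Rightarrow> (nat \<Rightarrow> 'a) \<Rightarrow> real" where
  "\<pi>bar T x \<equiv> pibar m A rf \<eta> Q T x"

lemma sum_others_policy:
  assumes "1 \<le> t"
  shows "(\<Sum>b\<in>other_actions m A i. others_policy t y b) = 1"
  unfolding other_actions_def
  using prod_sum_PiE[of "{..<m} - {i}" A "\<lambda>j a. \<pi> t j y a"] finite_actions sum_gamd[OF assms]
  by simp

lemma others_policy_nonneg:
  assumes "1 \<le> t" "b \<in> other_actions m A i"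
  shows "0 \<le> others_policy t y b"
proof (rule prod_nonneg)
  fix j assume "j \<in> {..<m} - {i}"
  then have "j < m" "b j \<in> A j" using assms(2) by (auto simp: other_actions_def)
  then show "0 \<le> \<pi> t j y (b j)" using gamd_pos[OF assms(1)] by (simp add: less_imp_le)
qed

lemma qbar_range:
  assumes "1 \<le> t" "ai \<in> A i"
  shows "0 \<le> qbar m A Q (\<pi> t) i y ai \<and> qbar m A Q (\<pi> t) i y ai \<le> 1"
proof -
  have Q: "0 \<le> Q i y (b(i := ai))" "Q i y (b(i := ai)) \<le> 1" if "b \<in> other_actions m A i" for b
    using Q_range[OF player upd_in_joint_actions[OF player that assms(2)]] by auto
  have "0 \<le> qbar m A Q (\<pi> t) i y ai"
    unfolding qbar_def
    by (intro sum_nonneg mult_nonneg_nonneg others_policy_nonneg[OF assms(1)] Q)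
  moreover have "qbar m A Q (\<pi> t) i y ai \<le> (\<Sum>b\<in>other_actions m A i. others_policy t y b * 1)"
    unfolding qbar_def
    by (intro sum_mono mult_left_mono others_policy_nonneg[OF assms(1)] Q)
  ultimately show ?thesis
    using sum_others_policy[OF assms(1)] by simp
qed

lemma pibar_upd:
  "\<pi>bar T x (b(i := ai)) = (1 / real T) * (\<Sum>t=1..T. \<pi> t i x ai * others_policy t x b)"
  unfolding pibar_def
  by (intro arg_cong[where f = "\<lambda>z. 1 / real T * z"] sum.cong refl) (rule prod_upd_split[OF player])

lemma marg_pibar: "marg m A (\<pi>bar T x) i ai = (1 / real T) * (\<Sum>t=1..T. \<pi> t i x ai)"
proof -
  have "marg m A (\<pi>bar T x) i ai
      = (1 / real T) * (\<Sum>t=1..T. \<pi> t i x ai * (\<Sum>b\<in>other_actions m A i. others_policy t x b))"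
    unfolding marg_def pibar_upd sum_distrib_left by (rule sum.swap)
  then show ?thesis by (simp add: sum_others_policy)
qed

lemma marg_others_pibar:
  "marg_others m A (\<pi>bar T x) i b = (1 / real T) * (\<Sum>t=1..T. others_policy t x b)"
proof -
  have "marg_others m A (\<pi>bar T x) i b
      = (1 / real T) * (\<Sum>t=1..T. (\<Sum>ai\<in>A i. \<pi> t i x ai) * others_policy t x b)"
    unfolding marg_others_def pibar_upd sum_distrib_left sum_distrib_right by (rule sum.swap)
  then show ?thesis by (simp add: sum_gamd player)
qed

lemma sum_marg_others_pibar:
  assumes "1 \<le> T"
  shows "(\<Sum>b\<in>other_actions m A i. marg_others m A (\<pi>bar T x) i b) = 1"
proof -
  have "(\<Sum>b\<in>other_actions m A i. marg_others m A (\<pi>bar T x) i b)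
      = (1 / real T) * (\<Sum>t=1..T. \<Sum>b\<in>other_actions m A i. others_policy t x b)"
    unfolding marg_others_pibar sum_distrib_left[symmetric] by (subst sum.swap) (rule refl)
  also have "\<dots> = 1"
    using assms by (simp add: sum_others_policy)
  finally show ?thesis .
qed

lemma expected_Q_marg_others_pibar:
  "(\<Sum>b\<in>other_actions m A i. marg_others m A (\<pi>bar T x) i b * Q i x (b(i := ai)))
     = (1 / real T) * (\<Sum>t=1..T. qbar m A Q (\<pi> t) i x ai)"
  unfolding marg_others_pibar qbar_def sum_distrib_left sum_distrib_right
  by (subst sum.swap) (simp only: mult.assoc)

lemma expected_Q_pibar:
  "(\<Sum>a\<in>joint_actions m A. \<pi>bar T x a * Q i x a)
     = (1 / real T) * (\<Sum>t=1..T. \<Sum>ai\<in>A i. \<pi> t i x ai * qbar m A Q (\<pi> t) i x ai)"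
proof -
  have "(\<Sum>a\<in>joint_actions m A. \<pi>bar T x a * Q i x a)
      = (\<Sum>ai\<in>A i. \<Sum>b\<in>other_actions m A i. \<Sum>t=1..T.
           1 / real T * (\<pi> t i x ai * (others_policy t x b * Q i x (b(i := ai)))))"
    unfolding sum_joint_actions_split[OF player] pibar_upd sum_distrib_left sum_distrib_right
    by (simp only: mult_ac)
  also have "\<dots> = (\<Sum>t=1..T. \<Sum>ai\<in>A i. \<Sum>b\<in>other_actions m A i.
           1 / real T * (\<pi> t i x ai * (others_policy t x b * Q i x (b(i := ai)))))"
    by (subst sum.swap, subst (2) sum.swap) (rule refl)
  also have "\<dots> = (1 / real T) * (\<Sum>t=1..T. \<Sum>ai\<in>A i. \<pi> t i x ai * qbar m A Q (\<pi> t) i x ai)"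
    unfolding qbar_def sum_distrib_left ..
  finally show ?thesis .
qed

lemma Vdag_marg_others_pibar:
  assumes "1 \<le> T"
  shows "Vdag m A rf \<eta> Q i x (marg_others m A (\<pi>bar T x) i)
       = (SUP p\<in>prob_simplex (A i). (1 / real T) * (\<Sum>t=1..T. floss m A rf \<eta> Q t i x p))"
proof -
  have "Vhat m A rf \<eta> Q i x
        (\<lambda>a. p (a i) * marg_others m A (\<pi>bar T x) i (restrict a ({..<m} - {i})))
      = (1 / real T) * (\<Sum>t=1..T. floss m A rf \<eta> Q t i x p)" for p
    unfolding Vhat_product[OF player sum_marg_others_pibar[OF assms]] expected_Q_marg_others_pibar
      floss_def sum_subtractf
    using assms
    by (simp add: sum_distrib_left right_diff_distrib mult.left_commute sum.swap[of _ "A i"])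
  then show ?thesis unfolding Vdag_def by simp
qed

lemma mean_floss_le_Vhat_pibar:
  assumes "1 \<le> T"
  shows "(1 / real T) * (\<Sum>t=1..T. floss m A rf \<eta> Q t i x (\<pi> t i x))
    \<le> Vhat m A rf \<eta> Q i x (\<pi>bar T x)"
proof -
  have "marg m A (\<pi>bar T x) i = (\<lambda>a. \<Sum>t=1..T. 1 / real T * \<pi> t i x a)"
    by (rule ext) (simp only: marg_pibar sum_distrib_left)
  then have "KL (A i) (marg m A (\<pi>bar T x) i) (rf i x)
      \<le> (\<Sum>t=1..T. 1 / real T * KL (A i) (\<pi> t i x) (rf i x))"
    using assms rf_pos[OF player] gamd_pos[OF _ player]
    by (simp only:) (rule KL_convex_combination_le; simp)
  then have "(1 / real T) * (\<Sum>t=1..T. KL (A i) (\<pi> t i x) (rf i x)) / \<eta>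
      \<ge> KL (A i) (marg m A (\<pi>bar T x) i) (rf i x) / \<eta>"
    using eta_pos by (simp add: sum_distrib_left divide_right_mono)
  then show ?thesis
    unfolding Vhat_def expected_Q_pibar floss_def sum_subtractf
    by (simp add: right_diff_distrib sum_divide_distrib mult.commute)
qed

lemma gamd_regret_le:
  assumes "1 \<le> T"
  shows "(SUP p\<in>prob_simplex (A i). (1 / real T) * (\<Sum>t=1..T. floss m A rf \<eta> Q t i x p))
           - (1 / real T) * (\<Sum>t=1..T. floss m A rf \<eta> Q t i x (\<pi> t i x))
         \<le> 2 * (\<eta> * (1 + ln (real T)) / real T)"
proof -
  interpret ftrl: entropic_ftrl "A i" "rf i x" \<eta> "\<lambda>t. qbar m A Q (\<pi> t) i x"
    using positive_reference_rf[OF player] eta_pos qbar_range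
    by (simp add: entropic_ftrl_def entropic_ftrl_axioms_def)
  have "floss m A rf \<eta> Q t i x (\<pi> t i x) = ftrl.gain t (ftrl.leader (t - 1))" if "t \<in> {1..T}" for t
    using that gamd_eq_gibbs[OF player, of _ "t - 1" x]
    by (auto simp: floss_eq_regularized_gain ftrl.leader_def intro: regularized_gain_cong)
  then have "(\<Sum>t=1..T. floss m A rf \<eta> Q t i x (\<pi> t i x))
      = (\<Sum>t=1..T. ftrl.gain t (ftrl.leader (t - 1)))"
    by (rule sum.cong[OF refl])
  then show ?thesis
    using ftrl.regret_le[OF assms] unfolding floss_eq_regularized_gain by simp
qed

lemma duality_gap_le_regret_le:
  assumes "1 \<le> T"
  shows "let pb = \<pi>bar T x;
          reg = (SUP p\<in>prob_simplex (A i). (1 / real T) * (\<Sum>t\<in>{1..T}. floss m A rf \<eta> Q t i x p))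
                - (1 / real T) * (\<Sum>t\<in>{1..T}. floss m A rf \<eta> Q t i x (\<pi> t i x))
      in Vdag m A rf \<eta> Q i x (marg_others m A pb i) - Vhat m A rf \<eta> Q i x pb \<le> reg
         \<and> reg \<le> 2 * (\<eta> * (1 + ln (real T)) / real T)"
  using Vdag_marg_others_pibar[OF assms] mean_floss_le_Vhat_pibar[OF assms] gamd_regret_le[OF assms]
  by (simp add: Let_def)

end

theorem mainTheorem11:
  "\<exists>C::real. \<forall>(m::nat) (A::nat \<Rightarrow> 'a set) (rf::nat \<Rightarrow> 'x \<Rightarrow> 'a \<Rightarrow> real) (\<eta>::real)
      (Q::nat \<Rightarrow> 'x \<Rightarrow> (nat \<Rightarrow> 'a) \<Rightarrow> real) (T::nat) (i::nat) (x::'x).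
     (\<forall>j<m. finite (A j) \<and> A j \<noteq> {}) \<longrightarrow>
     (\<forall>j<m. \<forall>y. (\<forall>a\<in>A j. 0 < rf j y a) \<and> (\<Sum>a\<in>A j. rf j y a) = 1) \<longrightarrow>
     (\<forall>j<m. \<forall>y. \<forall>a\<in>joint_actions m A. 0 \<le> Q j y a \<and> Q j y a \<le> 1) \<longrightarrow>
     0 < \<eta> \<longrightarrow> 1 \<le> T \<longrightarrow> i < m \<longrightarrow>
     (let pb = pibar m A rf \<eta> Q T x;
          reg = (SUP p\<in>prob_simplex (A i). (1 / real T) * (\<Sum>t\<in>{1..T}. floss m A rf \<eta> Q t i x p))
                - (1 / real T) * (\<Sum>t\<in>{1..T}. floss m A rf \<eta> Q t i x (gamd m A rf \<eta> Q t i x))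
      in Vdag m A rf \<eta> Q i x (marg_others m A pb i) - Vhat m A rf \<eta> Q i x pb \<le> reg
         \<and> reg \<le> C * (\<eta> * (1 + ln (real T)) / real T))"
proof (intro exI[of _ 2] allI impI, goal_cases)
  case (1 m A rf \<eta> Q T i x)
  then interpret gamd_player m A rf \<eta> Q i
    by unfold_locales auto
  from \<open>1 \<le> T\<close> show ?case
    by (rule duality_gap_le_regret_le)
qed

end
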